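(* Let $q$ be a prime power, let $\mathbb{F}=\mathrm{GF}(q^2)$, and let $H\subseteq \mathbb{F}^\ast$ be the (unique) subgroup of the multiplicative group of order $q+1$. Let $G(q^2,q+1)$ be the graph whose vertex set is $(\mathbb{F}\times\mathbb{F}\setminus\{(0,0)\})/\sim$, where $(a_1,b_1)\sim(a_2,b_2)$ iff there is $h\in H$ with $a_1=ha_2$ and $b_1=hb_2$, and in which two distinct vertices $\langle a,b\rangle$ and $\langle x,y\rangle$ are adjacent iff $ax+by\in H$. Then $G(q^2,q+1)$ is $K_{3,3}$-free.
   Context: $\langle a,b\rangle$ denotes the equivalence class of the pair $(a,b)$; the adjacency condition does not depend on the chosen representatives. The graph is simple (no loops). A graph is $K_{s,t}$-free if it contains no (not necessarily induced) subgraph isomorphic to the complete bipartite graph $K_{s,t}$. *)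

theory Defs
  imports "HOL-Computational_Algebra.Primes"
begin

definition pair_sim :: "'a::field set \<Rightarrow> (('a \<times> 'a) \<times> ('a \<times> 'a)) set" where
  "pair_sim H = {((a1, b1), (a2, b2)).
      (a1, b1) \<noteq> (0, 0) \<and> (a2, b2) \<noteq> (0, 0) \<and> (\<exists>h\<in>H. a1 = h * a2 \<and> b1 = h * b2)}"

definition GH_vertices :: "'a::field set \<Rightarrow> ('a \<times> 'a) set set" where
  "GH_vertices H = (UNIV - {(0, 0)}) // pair_sim H"

text \<open>Adjacency: distinct classes <a,b>, <x,y> with a x + b y in H
  (independent of representatives).\<close>
definition GH_adj :: "'a::field set \<Rightarrow> ('a \<times> 'a) set \<Rightarrow> ('a \<times> 'a) set \<Rightarrow> bool" where
  "GH_adj H U W \<longleftrightarrow> U \<noteq> W \<and>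
     (\<exists>a b x y. (a, b) \<in> U \<and> (x, y) \<in> W \<and> a * x + b * y \<in> H)"

definition Kst_free :: "'v set \<Rightarrow> ('v \<Rightarrow> 'v \<Rightarrow> bool) \<Rightarrow> nat \<Rightarrow> nat \<Rightarrow> bool" where
  "Kst_free V adj s t \<longleftrightarrow>
     \<not> (\<exists>A B. A \<subseteq> V \<and> B \<subseteq> V \<and> A \<inter> B = {} \<and> finite A \<and> finite B \<and>
            card A = s \<and> card B = t \<and> (\<forall>u\<in>A. \<forall>w\<in>B. adj u w))"

end

theory Submission
  imports Defs "HOL-Number_Theory.Residues" "HOL-Computational_Algebra.Polynomial"
begin

text \<open>
  Every t \<in> H satisfies t^(q+1) = 1 (Lagrange), and x \<mapsto> x^q is additive (Frobenius).
  Write u\<cdot>w = a x + b y for u = (a, b) and w = (x, y), so that adjacency means u\<cdot>w \<in> H for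
  any representatives.  If the classes of u_1, u_2, u_3 are all adjacent to those of w_1, w_2, w_3,
  then w_1, w_2 are linearly independent (otherwise w_2 would be an H-multiple of w_1), so
  w_3 = \<alpha> w_1 + \<beta> w_2, with \<alpha>, \<beta> \<noteq> 0 for the same reason.  The ratios
  t_i = (u_i\<cdot>w_2)/(u_i\<cdot>w_1) lie in H together with \<alpha> + \<beta> t_i = (u_i\<cdot>w_3)/(u_i\<cdot>w_1), and they
  are distinct because equal ratios force u_i, u_j into the same class.  But substituting
  t^q = 1/t into (\<alpha> + \<beta> t)^(q+1) = 1 shows that such t are roots of a quadratic with leading
  coefficient \<alpha>^q \<beta> \<noteq> 0, so there are at most two of them.
\<close>

lemma power_card_eq_1_if_mult_closed:
  fixes H :: "'a::field set"
  assumes "finite H" "0 \<notin> H" "\<And>x y. x \<in> H \<Longrightarrow> y \<in> H \<Longrightarrow> x * y \<in> H" "t \<in> H"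
  shows "t ^ card H = 1"
proof -
  have inj: "inj_on ((*) t) H"
    using assms(2,4) by (auto simp: inj_on_def)
  have "(*) t ` H = H"
    using assms card_subset_eq[of H "(*) t ` H"] card_image[OF inj] by auto
  then have "prod id H = prod ((*) t) H"
    using prod.reindex[OF inj, of id] by simp
  also have "\<dots> = t ^ card H * prod id H"
    by (simp add: prod.distrib)
  finally show ?thesis
    using assms(1,2) by auto
qed

lemma frobenius_prime_power:
  fixes x y :: "'a::{field,finite}"
  assumes "prime p" "card (UNIV :: 'a set) = p ^ n"
  shows "(x + y) ^ (p ^ k) = x ^ (p ^ k) + y ^ (p ^ k)"
proof -
  have char_prime: "prime CHAR('a)"
    by (intro prime_CHAR_semidom finite_imp_CHAR_pos) simp
  then have "CHAR('a) dvd p"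
    using CHAR_dvd_CARD[where 'a = 'a] assms(2) prime_dvd_power by metis
  then have "CHAR('a) = p"
    using char_prime assms(1) primes_dvd_imp_eq by blast
  then show ?thesis
    using freshmans_dream'[OF char_prime] by simp
qed

lemma proportional_if_det_eq_0:
  fixes a b x1 y1 x2 y2 :: "'a::field"
  assumes "x1 * y2 - x2 * y1 = 0" "a * x1 + b * y1 \<noteq> 0"
  defines "c \<equiv> (a * x2 + b * y2) / (a * x1 + b * y1)"
  shows "x2 = c * x1" "y2 = c * y1"
proof -
  have "(a * x2 + b * y2) * x1 - (a * x1 + b * y1) * x2 = b * (x1 * y2 - x2 * y1)"
    "(a * x2 + b * y2) * y1 - (a * x1 + b * y1) * y2 = - a * (x1 * y2 - x2 * y1)"
    by (simp_all add: algebra_simps)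
  then show "x2 = c * x1" "y2 = c * y1"
    using assms by (simp_all add: field_simps)
qed

lemma eq_0_if_det_ne_0:
  fixes a b x1 y1 x2 y2 :: "'a::field"
  assumes "x1 * y2 - x2 * y1 \<noteq> 0" "a * x1 + b * y1 = 0" "a * x2 + b * y2 = 0"
  shows "a = 0" "b = 0"
proof -
  have "a * (x1 * y2 - x2 * y1) = (a * x1 + b * y1) * y2 - (a * x2 + b * y2) * y1"
    "b * (x1 * y2 - x2 * y1) = (a * x2 + b * y2) * x1 - (a * x1 + b * y1) * x2"
    by (simp_all add: algebra_simps)
  then show "a = 0" "b = 0"
    using assms by simp_all
qed

lemma linear_combination_if_det_ne_0:
  fixes x1 y1 x2 y2 x3 y3 :: "'a::field"
  assumes "x1 * y2 - x2 * y1 \<noteq> 0"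
  obtains \<alpha> \<beta> where "x3 = \<alpha> * x1 + \<beta> * x2" "y3 = \<alpha> * y1 + \<beta> * y2"
proof
  let ?D = "x1 * y2 - x2 * y1"
  have "x3 * ?D = (x3 * y2 - x2 * y3) * x1 + (x1 * y3 - x3 * y1) * x2"
    "y3 * ?D = (x3 * y2 - x2 * y3) * y1 + (x1 * y3 - x3 * y1) * y2"
    by (simp_all add: algebra_simps)
  then have "x3 = ((x3 * y2 - x2 * y3) * x1 + (x1 * y3 - x3 * y1) * x2) / ?D"
    "y3 = ((x3 * y2 - x2 * y3) * y1 + (x1 * y3 - x3 * y1) * y2) / ?D"
    using assms by (simp_all add: eq_divide_eq)
  then show "x3 = (x3 * y2 - x2 * y3) / ?D * x1 + (x1 * y3 - x3 * y1) / ?D * x2"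
    "y3 = (x3 * y2 - x2 * y3) / ?D * y1 + (x1 * y3 - x3 * y1) / ?D * y2"
    by (simp_all add: add_divide_distrib)
qed

lemma mem_pair_sim_iff:
  "((a1, b1), (a2, b2)) \<in> pair_sim H \<longleftrightarrow>
    (a1, b1) \<noteq> (0, 0) \<and> (a2, b2) \<noteq> (0, 0) \<and> (\<exists>h\<in>H. a1 = h * a2 \<and> b1 = h * b2)"
  by (simp add: pair_sim_def)

lemma equiv_pair_sim:
  fixes H :: "'a::field set"
  assumes "0 \<notin> H" "1 \<in> H"
    and mult: "\<And>x y. x \<in> H \<Longrightarrow> y \<in> H \<Longrightarrow> x * y \<in> H"
    and inv: "\<And>x. x \<in> H \<Longrightarrow> inverse x \<in> H"
  shows "equiv (UNIV - {(0, 0)}) (pair_sim H)"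
proof (rule equivI)
  show "refl_on (UNIV - {(0, 0)}) (pair_sim H)"
    using assms(2) by (auto simp: refl_on_def mem_pair_sim_iff)
  show "sym (pair_sim H)"
  proof (rule symI)
    fix u v assume uv: "(u, v) \<in> pair_sim H"
    obtain a1 b1 a2 b2 where uv_eq: "u = (a1, b1)" "v = (a2, b2)"
      by (cases u, cases v)
    obtain h where h: "h \<in> H" "a1 = h * a2" "b1 = h * b2" "(a1, b1) \<noteq> (0, 0)" "(a2, b2) \<noteq> (0, 0)"
      using uv unfolding uv_eq mem_pair_sim_iff by blast
    then have "a2 = inverse h * a1" "b2 = inverse h * b1"
      using assms(1) by (auto simp: field_simps)
    then show "(v, u) \<in> pair_sim H"
      using h inv unfolding uv_eq mem_pair_sim_iff by blast
  qed
  show "trans (pair_sim H)"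
  proof (rule transI)
    fix u v w assume uv: "(u, v) \<in> pair_sim H" and vw: "(v, w) \<in> pair_sim H"
    obtain a1 b1 a2 b2 a3 b3 where uvw_eq: "u = (a1, b1)" "v = (a2, b2)" "w = (a3, b3)"
      by (cases u, cases v, cases w)
    obtain h g where hg: "h \<in> H" "g \<in> H" "(a1, b1) \<noteq> (0, 0)" "(a3, b3) \<noteq> (0, 0)"
      "a1 = h * a2" "b1 = h * b2" "a2 = g * a3" "b2 = g * b3"
      using uv vw unfolding uvw_eq mem_pair_sim_iff by blast
    then have "a1 = (h * g) * a3" "b1 = (h * g) * b3"
      by simp_all
    then show "(u, w) \<in> pair_sim H"
      using hg mult unfolding uvw_eq mem_pair_sim_iff by blast
  qed
  show "pair_sim H \<subseteq> (UNIV - {(0, 0)}) \<times> (UNIV - {(0, 0)})"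
    by (auto simp: pair_sim_def)
qed

lemma GH_adj_imp_in_H:
  fixes H :: "'a::field set"
  assumes "equiv (UNIV - {(0, 0)}) (pair_sim H)"
    and mult: "\<And>x y. x \<in> H \<Longrightarrow> y \<in> H \<Longrightarrow> x * y \<in> H"
    and "U \<in> GH_vertices H" "W \<in> GH_vertices H" "GH_adj H U W"
    and "(a, b) \<in> U" "(x, y) \<in> W"
  shows "a * x + b * y \<in> H"
proof -
  obtain a0 b0 x0 y0 where witness: "(a0, b0) \<in> U" "(x0, y0) \<in> W" "a0 * x0 + b0 * y0 \<in> H"
    using assms(5) unfolding GH_adj_def by blast
  have "((a, b), (a0, b0)) \<in> pair_sim H" "((x, y), (x0, y0)) \<in> pair_sim H"
    using quotient_eq_iff[OF assms(1)] assms(3,4,6,7) witness unfolding GH_vertices_def by blast+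
  then obtain h g where "h \<in> H" "g \<in> H" "a = h * a0" "b = h * b0" "x = g * x0" "y = g * y0"
    unfolding mem_pair_sim_iff by blast
  moreover have "h * a0 * (g * x0) + h * b0 * (g * y0) = (h * g) * (a0 * x0 + b0 * y0)"
    by (simp add: algebra_simps)
  ultimately show ?thesis
    using mult witness(3) by metis
qed

lemma Kst_free_GH_if_no_pair_configuration:
  fixes H :: "'a::field set"
  assumes equiv: "equiv (UNIV - {(0, 0)}) (pair_sim H)"
    and mult: "\<And>x y. x \<in> H \<Longrightarrow> y \<in> H \<Longrightarrow> x * y \<in> H"
    and no_configuration: "\<And>P Q. card P = s \<Longrightarrow> card Q = t \<Longrightarrow>
      \<forall>(a, b) \<in> P. \<forall>(x, y) \<in> Q. a * x + b * y \<in> H \<Longrightarrow>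
      \<forall>u \<in> P. \<forall>u' \<in> P. (u, u') \<in> pair_sim H \<longrightarrow> u = u' \<Longrightarrow>
      \<forall>w \<in> Q. \<forall>w' \<in> Q. (w, w') \<in> pair_sim H \<longrightarrow> w = w' \<Longrightarrow> False"
  shows "Kst_free (GH_vertices H) (GH_adj H) s t"
  unfolding Kst_free_def
proof
  assume "\<exists>A B. A \<subseteq> GH_vertices H \<and> B \<subseteq> GH_vertices H \<and> A \<inter> B = {} \<and> finite A \<and> finite B \<and>
    card A = s \<and> card B = t \<and> (\<forall>U\<in>A. \<forall>W\<in>B. GH_adj H U W)"
  then obtain A B where AB: "A \<subseteq> GH_vertices H" "B \<subseteq> GH_vertices H" "card A = s" "card B = t"
    and adj: "\<forall>U\<in>A. \<forall>W\<in>B. GH_adj H U W"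
    by blast
  define rep where "rep U = (SOME z. z \<in> U)" for U :: "('a \<times> 'a) set"
  have rep: "rep U \<in> U" if "U \<in> GH_vertices H" for U
    using in_quotient_imp_non_empty[OF equiv] that
    unfolding rep_def GH_vertices_def by (simp add: some_in_eq)
  have same_class: "U = U'" if "U \<in> GH_vertices H" "U' \<in> GH_vertices H" "(rep U, rep U') \<in> pair_sim H"
    for U U'
    using quotient_eq_iff[OF equiv _ _ rep rep] that unfolding GH_vertices_def by blast
  have sim_rep: "(rep U, rep U) \<in> pair_sim H" if "U \<in> GH_vertices H" for U
    using equiv rep[OF that] in_quotient_imp_subset[OF equiv] that
    unfolding equiv_def refl_on_def GH_vertices_def by blast
  have "inj_on rep (GH_vertices H)"
  proof (rule inj_onI)
    fix U U' assume "U \<in> GH_vertices H" "U' \<in> GH_vertices H" "rep U = rep U'"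
    then show "U = U'"
      using same_class sim_rep by metis
  qed
  then have inj: "inj_on rep A" "inj_on rep B"
    using AB(1,2) inj_on_subset by blast+
  have adj_rep: "a * x + b * y \<in> H" if "U \<in> A" "W \<in> B" "rep U = (a, b)" "rep W = (x, y)"
    for U W a b x y
  proof -
    have UW: "U \<in> GH_vertices H" "W \<in> GH_vertices H"
      using that(1,2) AB(1,2) by auto
    then have "(a, b) \<in> U" "(x, y) \<in> W"
      using rep that(3,4) by metis+
    then show ?thesis
      using GH_adj_imp_in_H[OF equiv mult UW] adj that(1,2) by blast
  qed
  show False
  proof (rule no_configuration[of "rep ` A" "rep ` B"])
    show "card (rep ` A) = s" "card (rep ` B) = t"
      using AB(3,4) card_image[OF inj(1)] card_image[OF inj(2)] by simp_all
    show "\<forall>(a, b) \<in> rep ` A. \<forall>(x, y) \<in> rep ` B. a * x + b * y \<in> H"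
      using adj_rep by (auto split: prod.splits)
    show "\<forall>u \<in> rep ` A. \<forall>u' \<in> rep ` A. (u, u') \<in> pair_sim H \<longrightarrow> u = u'"
      "\<forall>w \<in> rep ` B. \<forall>w' \<in> rep ` B. (w, w') \<in> pair_sim H \<longrightarrow> w = w'"
      using same_class AB(1,2) by (auto dest: subsetD)
  qed
qed

locale norm_one_subgroup =
  fixes q :: nat and H :: "'a::field set"
  assumes zero_notin: "0 \<notin> H"
    and mult_closed: "x \<in> H \<Longrightarrow> y \<in> H \<Longrightarrow> x * y \<in> H"
    and inverse_closed: "x \<in> H \<Longrightarrow> inverse x \<in> H"
    and norm_eq_1: "t \<in> H \<Longrightarrow> t ^ (q + 1) = 1"
    and frobenius_add: "(x + y) ^ q = x ^ q + y ^ q"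
begin

lemma nonzero: "t \<in> H \<Longrightarrow> t \<noteq> 0"
  using zero_notin by auto

lemma divide_closed: "x \<in> H \<Longrightarrow> y \<in> H \<Longrightarrow> x / y \<in> H"
  by (simp add: divide_inverse mult_closed inverse_closed)

lemma line_inter_circle_quadratic:
  assumes "t \<in> H" "\<alpha> + \<beta> * t \<in> H"
  shows "\<alpha> ^ q * \<beta> * t\<^sup>2 + (\<alpha> ^ (q + 1) + \<beta> ^ (q + 1) - 1) * t + \<alpha> * \<beta> ^ q = 0"
proof -
  have t_conj: "t * t ^ q = 1"
    using norm_eq_1[OF assms(1)] by simp
  have conj: "(\<alpha> + \<beta> * t) ^ q = \<alpha> ^ q + \<beta> ^ q * t ^ q"
    using frobenius_add by (simp add: power_mult_distrib)
  have "t = t * ((\<alpha> + \<beta> * t) * (\<alpha> + \<beta> * t) ^ q)"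
    using norm_eq_1[OF assms(2)] by simp
  also have "\<dots> = (\<alpha> + \<beta> * t) * (\<alpha> ^ q * t + \<beta> ^ q * (t * t ^ q))"
    unfolding conj by (simp add: algebra_simps)
  also have "\<dots> = (\<alpha> + \<beta> * t) * (\<alpha> ^ q * t + \<beta> ^ q)"
    using t_conj by simp
  finally show ?thesis
    by (simp add: algebra_simps power2_eq_square)
qed

lemma line_inter_circle_at_most_two:
  assumes "\<alpha> \<noteq> 0" "\<beta> \<noteq> 0"
  shows "finite {t \<in> H. \<alpha> + \<beta> * t \<in> H}" "card {t \<in> H. \<alpha> + \<beta> * t \<in> H} \<le> 2"
proof -
  define p where "p = [:\<alpha> * \<beta> ^ q, \<alpha> ^ (q + 1) + \<beta> ^ (q + 1) - 1, \<alpha> ^ q * \<beta>:]"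
  have p: "p \<noteq> 0" "degree p = 2"
    using assms by (simp_all add: p_def)
  have sub: "{t \<in> H. \<alpha> + \<beta> * t \<in> H} \<subseteq> {t. poly p t = 0}"
    using line_inter_circle_quadratic by (auto simp: p_def algebra_simps power2_eq_square)
  show "finite {t \<in> H. \<alpha> + \<beta> * t \<in> H}"
    using finite_subset[OF sub poly_roots_finite[OF p(1)]] .
  show "card {t \<in> H. \<alpha> + \<beta> * t \<in> H} \<le> 2"
    using card_mono[OF poly_roots_finite[OF p(1)] sub] card_poly_roots_bound[OF p(1)] p(2)
    by linarith
qed

lemma pair_sim_if_scaled:
  assumes "a * x + b * y \<in> H" "a * (c * x) + b * (c * y) \<in> H"
  shows "((c * x, c * y), (x, y)) \<in> pair_sim H"
proof -
  have "a * (c * x) + b * (c * y) = c * (a * x + b * y)"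
    by (simp add: algebra_simps)
  then have "c = (a * (c * x) + b * (c * y)) / (a * x + b * y)"
    using nonzero[OF assms(1)] by simp
  then have "c \<in> H"
    using divide_closed[OF assms(2,1)] by simp
  moreover have "(x, y) \<noteq> (0, 0)" "(c * x, c * y) \<noteq> (0, 0)"
    using nonzero[OF assms(1)] nonzero[OF assms(2)] by auto
  ultimately show ?thesis
    unfolding mem_pair_sim_iff by blast
qed

lemma pair_sim_if_det_eq_0:
  assumes "a * x1 + b * y1 \<in> H" "a * x2 + b * y2 \<in> H" "x1 * y2 - x2 * y1 = 0"
  shows "((x2, y2), (x1, y1)) \<in> pair_sim H"
proof -
  obtain c where "x2 = c * x1" "y2 = c * y1"
    using proportional_if_det_eq_0[OF assms(3) nonzero[OF assms(1)]] by blast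
  then show ?thesis
    using pair_sim_if_scaled[OF assms(1)] assms(2) by simp
qed

lemma pair_sim_if_ratios_eq:
  assumes "x1 * y2 - x2 * y1 \<noteq> 0" "a * x1 + b * y1 \<in> H" "a' * x1 + b' * y1 \<in> H"
    and "(a * x2 + b * y2) / (a * x1 + b * y1) = (a' * x2 + b' * y2) / (a' * x1 + b' * y1)"
  shows "((a', b'), (a, b)) \<in> pair_sim H"
proof -
  define d d' where "d = a * x1 + b * y1" and "d' = a' * x1 + b' * y1"
  define s where "s = d' / d"
  have nz: "d \<noteq> 0" "d' \<noteq> 0"
    using assms(2,3) nonzero by (auto simp: d_def d'_def)
  have "a' * x2 + b' * y2 = s * (a * x2 + b * y2)"
    using assms(4) nz unfolding d_def[symmetric] d'_def[symmetric] by (simp add: s_def field_simps)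
  moreover have "a' * x1 + b' * y1 = s * (a * x1 + b * y1)"
    using nz by (simp add: s_def flip: d_def d'_def)
  moreover have "(a' - s * a) * x + (b' - s * b) * y = (a' * x + b' * y) - s * (a * x + b * y)" for x y
    by (simp add: algebra_simps)
  ultimately have "(a' - s * a) * x1 + (b' - s * b) * y1 = 0" "(a' - s * a) * x2 + (b' - s * b) * y2 = 0"
    by simp_all
  from eq_0_if_det_ne_0[OF assms(1) this] have "a' = s * a" "b' = s * b"
    by simp_all
  moreover have "x1 * a + y1 * b \<in> H" "x1 * (s * a) + y1 * (s * b) \<in> H"
    using assms(2,3) \<open>a' = s * a\<close> \<open>b' = s * b\<close> by (simp_all add: mult.commute)
  ultimately show ?thesis
    using pair_sim_if_scaled[of x1 a y1 b s] by simp
qed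

lemma ratio_in_line_inter_circle:
  assumes "a * x1 + b * y1 \<in> H" "a * x2 + b * y2 \<in> H" "a * x3 + b * y3 \<in> H"
    and "x3 = \<alpha> * x1 + \<beta> * x2" "y3 = \<alpha> * y1 + \<beta> * y2"
  shows "(a * x2 + b * y2) / (a * x1 + b * y1) \<in> {t \<in> H. \<alpha> + \<beta> * t \<in> H}"
proof -
  define d where "d = a * x1 + b * y1"
  have "d \<noteq> 0"
    using nonzero[OF assms(1)] by (simp add: d_def)
  moreover have "a * x3 + b * y3 = \<alpha> * d + \<beta> * (a * x2 + b * y2)"
    by (simp add: assms(4,5) d_def algebra_simps)
  ultimately have "\<alpha> + \<beta> * ((a * x2 + b * y2) / d) = (a * x3 + b * y3) / d"
    by (simp add: field_simps)
  then show ?thesis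
    using divide_closed assms(1-3) by (simp add: d_def)
qed

lemma no_K33_between_pair_sets:
  assumes "card P = 3" "card Q = 3"
    and dot: "\<forall>(a, b) \<in> P. \<forall>(x, y) \<in> Q. a * x + b * y \<in> H"
    and P_classes: "\<forall>u \<in> P. \<forall>u' \<in> P. (u, u') \<in> pair_sim H \<longrightarrow> u = u'"
    and Q_classes: "\<forall>w \<in> Q. \<forall>w' \<in> Q. (w, w') \<in> pair_sim H \<longrightarrow> w = w'"
  shows False
proof -
  obtain x1 y1 x2 y2 x3 y3 where Q: "Q = {(x1, y1), (x2, y2), (x3, y3)}"
    and distinct: "(x1, y1) \<noteq> (x2, y2)" "(x2, y2) \<noteq> (x3, y3)" "(x1, y1) \<noteq> (x3, y3)"
    using assms(2) card_3_iff by (metis surj_pair)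
  have on_Q: "a * x1 + b * y1 \<in> H" "a * x2 + b * y2 \<in> H" "a * x3 + b * y3 \<in> H"
    if "(a, b) \<in> P" for a b
    using dot that Q by auto
  obtain a1 b1 where "(a1, b1) \<in> P"
    using assms(1) by (metis card.empty ex_in_conv surj_pair zero_neq_numeral)
  note H1 = on_Q[OF this]
  have det: "x1 * y2 - x2 * y1 \<noteq> 0"
    using pair_sim_if_det_eq_0[OF H1(1,2)] Q_classes Q distinct by blast
  then obtain \<alpha> \<beta> where comb: "x3 = \<alpha> * x1 + \<beta> * x2" "y3 = \<alpha> * y1 + \<beta> * y2"
    using linear_combination_if_det_ne_0 by blast
  have "\<beta> \<noteq> 0"
    using pair_sim_if_scaled[of a1 x1 b1 y1 \<alpha>] H1 comb Q_classes Q distinct by auto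
  moreover have "\<alpha> \<noteq> 0"
    using pair_sim_if_scaled[of a1 x2 b1 y2 \<beta>] H1 comb Q_classes Q distinct by auto
  ultimately have fin: "finite {t \<in> H. \<alpha> + \<beta> * t \<in> H}"
    and le2: "card {t \<in> H. \<alpha> + \<beta> * t \<in> H} \<le> 2"
    using line_inter_circle_at_most_two by blast+
  define ratio where "ratio = (\<lambda>(a, b). (a * x2 + b * y2) / (a * x1 + b * y1))"
  have into: "ratio ` P \<subseteq> {t \<in> H. \<alpha> + \<beta> * t \<in> H}"
    using ratio_in_line_inter_circle[OF on_Q comb] by (auto simp: ratio_def)
  have inj: "inj_on ratio P"
  proof (rule inj_onI)
    fix u u' assume u: "u \<in> P" "u' \<in> P" "ratio u = ratio u'"
    obtain a b a' b' where ab: "u = (a, b)" "u' = (a', b')"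
      by (cases u, cases u')
    have in_H: "a * x1 + b * y1 \<in> H" "a' * x1 + b' * y1 \<in> H"
      using on_Q(1) u(1,2) unfolding ab by blast+
    have "(a * x2 + b * y2) / (a * x1 + b * y1) = (a' * x2 + b' * y2) / (a' * x1 + b' * y1)"
      using u(3) unfolding ab ratio_def case_prod_conv .
    then have "(u', u) \<in> pair_sim H"
      unfolding ab by (rule pair_sim_if_ratios_eq[OF det in_H])
    then show "u = u'"
      using P_classes u by blast
  qed
  have "card P = card (ratio ` P)"
    using card_image[OF inj] by simp
  also have "\<dots> \<le> 2"
    using card_mono[OF fin into] le2 by simp
  finally show False
    using assms(1) by simp
qed

end

theorem theorem2:
  fixes q :: nat and H :: "'a::{field, finite} set"
  assumes "\<exists>p k. prime p \<and> k \<ge> 1 \<and> q = p ^ k"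
    and "card (UNIV :: 'a set) = q ^ 2"
    and "0 \<notin> H" and "1 \<in> H"
    and "\<And>x y. x \<in> H \<Longrightarrow> y \<in> H \<Longrightarrow> x * y \<in> H"
    and "\<And>x. x \<in> H \<Longrightarrow> inverse x \<in> H"
    and "card H = q + 1"
  shows "Kst_free (GH_vertices H) (GH_adj H) 3 3"
proof -
  obtain p k where p: "prime p" "q = p ^ k"
    using assms(1) by blast
  interpret norm_one_subgroup q H
  proof
    show "t ^ (q + 1) = 1" if "t \<in> H" for t
      using power_card_eq_1_if_mult_closed[OF _ assms(3,5) that] assms(7) by simp
    have "card (UNIV :: 'a set) = p ^ (k * 2)"
      using assms(2) p(2) by (simp add: power_mult)
    then show "(x + y) ^ q = x ^ q + y ^ q" for x y :: 'a
      using frobenius_prime_power[OF p(1)] p(2) by blast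
  qed (use assms(3,5,6) in auto)
  show ?thesis
    by (rule Kst_free_GH_if_no_pair_configuration[OF equiv_pair_sim[OF assms(3-6)] assms(5)
          no_K33_between_pair_sets])
qed

end
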